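(* Let $T$ be a tree on $n\ge3$ vertices, let $M$ be its order-$4$ Steiner distance hypermatrix, and let $A=\frac{2}{n}J_n-I_n$. Define the order-$4$ multilinear forms $C_1(\mathbf{x}_1,\mathbf{x}_2,\mathbf{x}_3,\mathbf{x}_4)=M(\mathbf{x}_1,\mathbf{x}_2,\mathbf{x}_3,A\mathbf{x}_4)$ and $C_3(\mathbf{x}_1,\mathbf{x}_2,\mathbf{x}_3,\mathbf{x}_4)=M(\mathbf{x}_1,A\mathbf{x}_2,A\mathbf{x}_3,A\mathbf{x}_4)$. Then $C_1+C_3$ is positive definite: $(C_1+C_3)(\mathbf{v},\mathbf{v},\mathbf{v},\mathbf{v})>0$ for every nonzero $\mathbf{v}\in\mathbb{R}^n$.
   Context: $T$ is a tree with vertex set $\{1,\dots,n\}$. For $U\subseteq V(T)$, the Steiner distance $S(U)$ is the minimum number of edges of a connected subgraph of $T$ whose vertex set contains $U$. The order-$4$ Steiner distance hypermatrix $M$ has entries $M_{(i_1,\dots,i_4)}=S(\{i_1,\dots,i_4\})$, and $M(\mathbf{x}_1,\dots,\mathbf{x}_4)=\sum_{\mathbf{i}\in V(T)^4}M_{\mathbf{i}}\prod_{j=1}^4 x_{j i_j}$. $J_n$ is the $n\times n$ all-ones matrix and $I_n$ the identity matrix. *)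

theory Defs
  imports "HOL-Analysis.Analysis"
begin

text \<open>Simple graphs on a vertex set given by an edge set E of 2-element vertex sets.\<close>

definition adj_rel :: "'a set set \<Rightarrow> ('a \<times> 'a) set" where
  "adj_rel F = {(a, b). {a, b} \<in> F}"

definition connected_on :: "'a set \<Rightarrow> 'a set set \<Rightarrow> bool" where
  "connected_on W F \<longleftrightarrow> (\<forall>a\<in>W. \<forall>b\<in>W. (a, b) \<in> (adj_rel F)\<^sup>*)"

definition has_cycle :: "'a set set \<Rightarrow> bool" where
  "has_cycle E \<longleftrightarrow> (\<exists>cs. length cs \<ge> 3 \<and> distinct cs \<and>
      (\<forall>i < length cs - 1. {cs ! i, cs ! Suc i} \<in> E) \<and> {last cs, hd cs} \<in> E)"

definition is_tree :: "'a set \<Rightarrow> 'a set set \<Rightarrow> bool" where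
  "is_tree V E \<longleftrightarrow> (\<forall>e\<in>E. card e = 2 \<and> e \<subseteq> V) \<and> connected_on V E \<and> \<not> has_cycle E"

definition steiner_dist :: "'a set \<Rightarrow> 'a set set \<Rightarrow> 'a set \<Rightarrow> nat" where
  "steiner_dist V E U = (LEAST k. \<exists>W F. U \<subseteq> W \<and> W \<subseteq> V \<and> F \<subseteq> E \<and> (\<forall>e\<in>F. e \<subseteq> W)
        \<and> connected_on W F \<and> card F = k)"

definition steiner_form4 :: "('n::finite) set set \<Rightarrow> real^'n \<Rightarrow> real^'n \<Rightarrow> real^'n \<Rightarrow> real^'n \<Rightarrow> real" where
  "steiner_form4 E x1 x2 x3 x4 =
     (\<Sum>i1\<in>UNIV. \<Sum>i2\<in>UNIV. \<Sum>i3\<in>UNIV. \<Sum>i4\<in>UNIV.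
        real (steiner_dist UNIV E {i1, i2, i3, i4}) * x1 $ i1 * x2 $ i2 * x3 $ i3 * x4 $ i4)"

definition A_mat :: "real^'n^'n" where
  "A_mat = (\<chi> i j. 2 / real CARD('n::finite) - (if i = j then 1 else 0))"

end

theory Submission
  imports Defs "HOL-Library.Transitive_Closure_Table"
begin

text \<open>
  In a tree, the Steiner distance of a vertex set \<open>U\<close> is the number of edges whose removal
  separates \<open>U\<close>. Hence, writing \<open>S\<close> for the vertex set of one component of \<open>T - e\<close> and
  \<open>\<sigma>_X(x)\<close> for the sum of the entries of \<open>x\<close> indexed by \<open>X\<close>, the form \<open>M(x1, x2, x3, x4)\<close>
  is the sum over all edges \<open>e\<close> of
  \<open>\<Prod>k. \<sigma>_V(xk) - \<Prod>k. \<sigma>_S(xk) - \<Prod>k. \<sigma>_(V-S)(xk)\<close>.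
  With \<open>s = \<sigma>_V(v)\<close>, \<open>a = \<sigma>_S(v)\<close> and \<open>t = |S|/n\<close> one has \<open>\<sigma>_V(Av) = s\<close> and
  \<open>\<sigma>_S(Av) = 2ts - a\<close>, so the contribution of \<open>e\<close> to \<open>(C1 + C3)(v, v, v, v)\<close> is
  \<open>4(a - ts)^4 + 4 s^4 t (1 - t) (t^2 - t + 2) \<ge> 0\<close>. If the total vanishes, then \<open>s = 0\<close>
  because \<open>0 < t < 1\<close>, hence every component sum \<open>a\<close> vanishes, and this forces \<open>v = 0\<close>
  by induction on the size of the components.
\<close>

subsection \<open>The two sides of an edge of a tree\<close>

lemma adj_rel_iff [simp]: "(a, b) \<in> adj_rel F \<longleftrightarrow> {a, b} \<in> F"
  by (simp add: adj_rel_def)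

lemma adj_rel_rtrancl_sym:
  assumes "(a, b) \<in> (adj_rel F)\<^sup>*"
  shows "(b, a) \<in> (adj_rel F)\<^sup>*"
proof -
  have "sym (adj_rel F)"
    by (auto intro!: symI simp: insert_commute)
  with assms show ?thesis
    by (metis sym_rtrancl symD)
qed

definition side :: "'a set set \<Rightarrow> 'a set \<Rightarrow> 'a \<Rightarrow> 'a set" where
  "side E e x = {z. (x, z) \<in> (adj_rel (E - {e}))\<^sup>*}"

lemma side_self [simp]: "x \<in> side E e x"
  by (simp add: side_def)

lemma side_closed: "a \<in> side E e x \<Longrightarrow> {a, b} \<in> E \<Longrightarrow> {a, b} \<noteq> e \<Longrightarrow> b \<in> side E e x"
  by (auto simp: side_def intro: rtrancl_into_rtrancl)

lemma other_end_notin_side: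
  assumes "\<not> has_cycle E" "{x, y} \<in> E" "x \<noteq> y"
  shows "y \<notin> side E {x, y} x"
proof
  let ?R = "\<lambda>a b. {a, b} \<in> E - {{x, y}}"
  assume "y \<in> side E {x, y} x"
  then have "?R\<^sup>*\<^sup>* x y"
    by (simp add: side_def rtranclp_rtrancl_eq adj_rel_def)
  then obtain xs0 where "rtrancl_path ?R x xs0 y"
    by (auto simp: rtranclp_eq_rtrancl_path)
  then obtain xs where path: "rtrancl_path ?R x xs y" and distinct: "distinct (x # xs)"
    by (rule rtrancl_path_distinct)
  have steps: "{(x # xs) ! i, (x # xs) ! Suc i} \<in> E - {{x, y}}" if "i < length xs" for i
    using rtrancl_path_nth[OF path that] by simp
  have "xs \<noteq> []"
    using path \<open>x \<noteq> y\<close> by (auto elim: rtrancl_path.cases)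
  then have last: "last (x # xs) = y"
    using rtrancl_path_last[OF path] by simp
  have "length xs \<noteq> 1"
  proof
    assume "length xs = 1"
    then obtain z where "xs = [z]" by (cases xs) auto
    with last steps[of 0] show False by simp
  qed
  with \<open>xs \<noteq> []\<close> have "length (x # xs) \<ge> 3"
    by (cases "length xs") auto
  moreover have "{last (x # xs), hd (x # xs)} \<in> E"
    using last \<open>{x, y} \<in> E\<close> by (simp add: insert_commute)
  ultimately have "has_cycle E"
    unfolding has_cycle_def using distinct steps by (intro exI[of _ "x # xs"]) auto
  with assms(1) show False by simp
qed

lemma edge_leaving_side:
  assumes "\<not> has_cycle E" "{x, y} \<in> E" "x \<noteq> y"
    and "{b, c} \<in> E" "b \<in> side E {x, y} x" "c \<notin> side E {x, y} x"
  shows "b = x \<and> c = y"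
proof -
  have "{b, c} = {x, y}"
    using side_closed[OF assms(5,4)] assms(6) by blast
  moreover have "b \<noteq> y"
    using other_end_notin_side[OF assms(1-3)] assms(5) by blast
  ultimately show ?thesis by (auto simp: doubleton_eq_iff)
qed

lemma reachable_in_side_union:
  assumes "(x, z) \<in> (adj_rel E)\<^sup>*"
  shows "z \<in> side E {x, y} x \<union> side E {x, y} y"
  using assms
proof (induction rule: rtrancl_induct)
  case (step b c)
  then show ?case
    using side_closed[of b E "{x, y}" _ c] by (cases "{b, c} = {x, y}") (auto simp: doubleton_eq_iff)
qed simp

lemma tree_edge_distinct:
  assumes "is_tree V E" "{x, y} \<in> E"
  shows "x \<noteq> y"
proof
  assume "x = y"
  then have "card {x, y} = 1"
    by simp
  with assms show False
    by (simp add: is_tree_def)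
qed

lemma side_other_end:
  assumes tree: "is_tree UNIV E" and xy: "{x, y} \<in> E"
  shows "side E {x, y} y = - side E {x, y} x"
proof (intro equalityI subsetI)
  fix z
  assume "z \<in> side E {x, y} y"
  then have "(z, y) \<in> (adj_rel (E - {{x, y}}))\<^sup>*"
    by (simp add: side_def adj_rel_rtrancl_sym)
  then have "z \<in> side E {x, y} x \<Longrightarrow> y \<in> side E {x, y} x"
    by (auto simp: side_def)
  moreover have "y \<notin> side E {x, y} x"
    using other_end_notin_side[of E x y] xy tree_edge_distinct[OF tree xy] tree
    by (simp add: is_tree_def)
  ultimately show "z \<in> - side E {x, y} x"
    by blast
next
  fix z
  assume "z \<in> - side E {x, y} x"
  moreover have "(x, z) \<in> (adj_rel E)\<^sup>*"
    using tree by (simp add: is_tree_def connected_on_def)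
  ultimately show "z \<in> side E {x, y} y"
    using reachable_in_side_union[of x z E y] by blast
qed

text \<open>A walk can only leave the side through \<open>x\<close>, so its part inside the side is a walk
  in the edges of \<open>F\<close> within the side.\<close>

lemma walk_restrict_to_side:
  assumes "\<not> has_cycle E" "{x, y} \<in> E" "x \<noteq> y" "F \<subseteq> E"
    and "(a, b) \<in> (adj_rel F)\<^sup>*" "a \<in> side E {x, y} x"
  shows "(a, if b \<in> side E {x, y} x then b else x)
           \<in> (adj_rel {f \<in> F. f \<subseteq> side E {x, y} x})\<^sup>*"
  using assms(5)
proof (induction rule: rtrancl_induct)
  case (step b c)
  let ?S = "side E {x, y} x"
  have bc: "{b, c} \<in> E" "{c, b} \<in> E"
    using step.hyps(2) assms(4) by (auto simp: insert_commute)
  consider "b \<in> ?S" "c \<in> ?S" | "b \<in> ?S" "c \<notin> ?S" | "b \<notin> ?S" "c \<in> ?S" | "b \<notin> ?S" "c \<notin> ?S"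
    by blast
  then show ?case
  proof cases
    case 1
    then have "(b, c) \<in> adj_rel {f \<in> F. f \<subseteq> ?S}"
      using step.hyps(2) by simp
    with 1 step.IH show ?thesis
      by (simp add: rtrancl_into_rtrancl)
  next
    case 2
    then show ?thesis
      using step.IH edge_leaving_side[OF assms(1-3) bc(1)] by simp
  next
    case 3
    then show ?thesis
      using step.IH edge_leaving_side[OF assms(1-3) bc(2)] by simp
  qed (use step.IH in simp)
qed (simp add: assms(6))

lemma connected_subgraph_shrink:
  assumes "\<not> has_cycle E" "{x, y} \<in> E" "x \<noteq> y" "{x, y} \<in> F" "F \<subseteq> E" "finite F"
    and "U \<subseteq> W" "U \<subseteq> side E {x, y} x" "\<forall>f\<in>F. f \<subseteq> W" "connected_on W F"
  shows "\<exists>W' F'. U \<subseteq> W' \<and> F' \<subseteq> E \<and> (\<forall>f\<in>F'. f \<subseteq> W') \<and> connected_on W' F'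
           \<and> card F' < card F"
proof -
  let ?S = "side E {x, y} x"
  have "connected_on (W \<inter> ?S) {f \<in> F. f \<subseteq> ?S}"
    unfolding connected_on_def
  proof (intro ballI)
    fix a b
    assume a: "a \<in> W \<inter> ?S" and b: "b \<in> W \<inter> ?S"
    then have "(a, b) \<in> (adj_rel F)\<^sup>*"
      using assms(10) by (simp add: connected_on_def)
    with a b show "(a, b) \<in> (adj_rel {f \<in> F. f \<subseteq> ?S})\<^sup>*"
      using walk_restrict_to_side[OF assms(1-3,5), of a b] by simp
  qed
  moreover have "{f \<in> F. f \<subseteq> ?S} \<subset> F"
    using other_end_notin_side[OF assms(1-3)] assms(4)
    by (metis (no_types, lifting) insert_subset mem_Collect_eq psubsetI subsetI)
  then have "card {f \<in> F. f \<subseteq> ?S} < card F"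
    using assms(6) by (simp add: psubset_card_mono)
  ultimately show ?thesis
    using assms(5,7-9) by (intro exI[of _ "W \<inter> ?S"] exI[of _ "{f \<in> F. f \<subseteq> ?S}"]) auto
qed

subsection \<open>Steiner distance in a tree\<close>

definition shore :: "'a set set \<Rightarrow> 'a set \<Rightarrow> 'a set" where
  "shore E e = side E e (SOME x. x \<in> e)"

definition separates :: "'a set set \<Rightarrow> 'a set \<Rightarrow> 'a set \<Rightarrow> bool" where
  "separates E e U \<longleftrightarrow> U \<inter> shore E e \<noteq> {} \<and> U - shore E e \<noteq> {}"

lemma tree_edge_shore:
  assumes tree: "is_tree UNIV E" and "e \<in> E"
  obtains x y where "e = {x, y}" "x \<noteq> y" "shore E e = side E e x" "- shore E e = side E e y"
proof -
  have "card e = 2"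
    using assms by (simp add: is_tree_def)
  then obtain a b where ab: "e = {a, b}" "a \<noteq> b"
    unfolding card_2_iff by blast
  have "(SOME x. x \<in> e) \<in> e"
    by (rule someI[of _ a]) (simp add: ab)
  then consider "(SOME x. x \<in> e) = a" | "(SOME x. x \<in> e) = b"
    using ab by auto
  then show ?thesis
  proof cases
    case 1
    then show ?thesis
      using that[of a b] ab side_other_end[OF tree, of a b] assms(2) by (simp add: shore_def)
  next
    case 2
    then show ?thesis
      using that[of b a] ab side_other_end[OF tree, of b a] assms(2)
      by (simp add: shore_def insert_commute)
  qed
qed

lemma separating_edge_mem:
  assumes "is_tree UNIV E" "e \<in> E" "separates E e U"
    and "U \<subseteq> W" "F \<subseteq> E" "connected_on W F"
  shows "e \<in> F"
proof (rule ccontr)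
  assume "e \<notin> F"
  obtain x where shore: "shore E e = side E e x"
    using tree_edge_shore[OF assms(1,2)] by metis
  obtain u1 u2 where u: "u1 \<in> U" "u1 \<in> side E e x" "u2 \<in> U" "u2 \<notin> side E e x"
    using assms(3) shore by (auto simp: separates_def)
  have "adj_rel F \<subseteq> adj_rel (E - {e})"
    using assms(5) \<open>e \<notin> F\<close> unfolding adj_rel_def by blast
  moreover have "(u1, u2) \<in> (adj_rel F)\<^sup>*"
    using assms(4,6) u by (simp add: connected_on_def subset_iff)
  ultimately have "(u1, u2) \<in> (adj_rel (E - {e}))\<^sup>*"
    using rtrancl_mono by blast
  with u(2,4) show False
    unfolding side_def by (meson mem_Collect_eq rtrancl_trans)
qed

lemma minimal_connected_subgraph_edge_separates:
  fixes E :: "'n::finite set set"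
  assumes tree: "is_tree UNIV E"
    and UW: "U \<subseteq> W" and FE: "F \<subseteq> E" and FW: "\<forall>f\<in>F. f \<subseteq> W" and conn: "connected_on W F"
    and minimal: "\<forall>W' F'. U \<subseteq> W' \<and> F' \<subseteq> E \<and> (\<forall>f\<in>F'. f \<subseteq> W') \<and> connected_on W' F'
                    \<longrightarrow> card F \<le> card F'"
    and "e \<in> F"
  shows "separates E e U"
proof (rule ccontr)
  assume "\<not> separates E e U"
  from \<open>e \<in> F\<close> FE have "e \<in> E" ..
  then obtain x y where e: "e = {x, y}" "x \<noteq> y"
    and sides: "shore E e = side E e x" "- shore E e = side E e y"
    by (rule tree_edge_shore[OF tree])
  have acyclic: "\<not> has_cycle E"
    using tree by (simp add: is_tree_def)
  have no_smaller: False if sub: "U \<subseteq> side E {a, b} a" and ab: "{a, b} = e" "a \<noteq> b" for a b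
  proof -
    obtain W' F' where "U \<subseteq> W' \<and> F' \<subseteq> E \<and> (\<forall>f\<in>F'. f \<subseteq> W') \<and> connected_on W' F'"
      and "card F' < card F"
      using connected_subgraph_shrink[OF acyclic _ ab(2) _ FE finite UW sub FW conn]
        ab(1) \<open>e \<in> E\<close> \<open>e \<in> F\<close> by blast
    with minimal show False
      by (meson leD)
  qed
  from \<open>\<not> separates E e U\<close> consider "U \<subseteq> side E {x, y} x" | "U \<subseteq> side E {y, x} y"
    using e sides by (auto simp: separates_def insert_commute)
  then show False
  proof cases
    case 1
    then show False
      using no_smaller e by blast
  next
    case 2
    moreover have "{y, x} = e"
      using e(1) by (simp only: insert_commute)
    ultimately show False
      using no_smaller e(2) by blast
  qed
qed

theorem steiner_dist_tree:
  fixes E :: "'n::finite set set"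
  assumes tree: "is_tree UNIV E"
  shows "steiner_dist UNIV E U = card {e \<in> E. separates E e U}"
proof -
  define covers where "covers W F \<longleftrightarrow>
    U \<subseteq> W \<and> F \<subseteq> E \<and> (\<forall>e\<in>F. e \<subseteq> W) \<and> connected_on W F" for W F
  have dist: "steiner_dist UNIV E U = (LEAST k. \<exists>W F. covers W F \<and> card F = k)"
    by (simp add: steiner_dist_def covers_def)
  have "covers UNIV E"
    using tree unfolding covers_def is_tree_def by blast
  then have "\<exists>W F. covers W F \<and> card F = (LEAST k. \<exists>W F. covers W F \<and> card F = k)"
    using LeastI_ex[of "\<lambda>k. \<exists>W F. covers W F \<and> card F = k"] by blast
  then obtain W F where cover: "covers W F" and card: "card F = steiner_dist UNIV E U"
    unfolding dist by blast
  then have UW: "U \<subseteq> W" and FE: "F \<subseteq> E" and FW: "\<forall>e\<in>F. e \<subseteq> W" and conn: "connected_on W F"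
    by (simp_all add: covers_def)
  have minimal: "\<forall>W' F'. U \<subseteq> W' \<and> F' \<subseteq> E \<and> (\<forall>f\<in>F'. f \<subseteq> W') \<and> connected_on W' F'
                    \<longrightarrow> card F \<le> card F'"
    unfolding card dist covers_def by (blast intro: Least_le)
  have "F \<subseteq> {e \<in> E. separates E e U}"
  proof
    fix e
    assume "e \<in> F"
    then have "separates E e U"
      by (rule minimal_connected_subgraph_edge_separates[OF tree UW FE FW conn minimal])
    with \<open>e \<in> F\<close> FE show "e \<in> {e \<in> E. separates E e U}"
      by blast
  qed
  moreover have "{e \<in> E. separates E e U} \<subseteq> F"
    using separating_edge_mem[OF tree _ _ UW FE conn] by blast
  ultimately show ?thesis
    using card by (metis subset_antisym)
qed

subsection \<open>The Steiner form as a sum over edges\<close>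

lemma of_bool_meets_both:
  "of_bool ({i1, i2, i3, i4} \<inter> S \<noteq> {} \<and> {i1, i2, i3, i4} - S \<noteq> {}) =
   (1::real) - of_bool (i1 \<in> S) * of_bool (i2 \<in> S) * of_bool (i3 \<in> S) * of_bool (i4 \<in> S)
   - of_bool (i1 \<notin> S) * of_bool (i2 \<notin> S) * of_bool (i3 \<notin> S) * of_bool (i4 \<notin> S)"
  by (cases "i1 \<in> S"; cases "i2 \<in> S"; cases "i3 \<in> S"; cases "i4 \<in> S") auto

lemma sum4_mult_separable:
  fixes f1 f2 f3 f4 :: "'a \<Rightarrow> real"
  shows "(\<Sum>i1\<in>A. \<Sum>i2\<in>A. \<Sum>i3\<in>A. \<Sum>i4\<in>A. f1 i1 * f2 i2 * f3 i3 * f4 i4)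
       = sum f1 A * sum f2 A * sum f3 A * sum f4 A"
  by (simp only: sum_distrib_left[symmetric] sum_distrib_right[symmetric])

lemma sum4_separating_indicator:
  fixes f1 f2 f3 f4 :: "'n::finite \<Rightarrow> real"
  shows "(\<Sum>i1\<in>UNIV. \<Sum>i2\<in>UNIV. \<Sum>i3\<in>UNIV. \<Sum>i4\<in>UNIV.
      of_bool ({i1, i2, i3, i4} \<inter> S \<noteq> {} \<and> {i1, i2, i3, i4} - S \<noteq> {})
        * f1 i1 * f2 i2 * f3 i3 * f4 i4)
    = sum f1 UNIV * sum f2 UNIV * sum f3 UNIV * sum f4 UNIV
      - sum f1 S * sum f2 S * sum f3 S * sum f4 S
      - sum f1 (- S) * sum f2 (- S) * sum f3 (- S) * sum f4 (- S)"
proof -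
  let ?inS = "\<lambda>f i. of_bool (i \<in> S) * f i" and ?outS = "\<lambda>f i. of_bool (i \<notin> S) * f i"
  have "of_bool ({i1, i2, i3, i4} \<inter> S \<noteq> {} \<and> {i1, i2, i3, i4} - S \<noteq> {})
          * f1 i1 * f2 i2 * f3 i3 * f4 i4
      = f1 i1 * f2 i2 * f3 i3 * f4 i4
        - ?inS f1 i1 * ?inS f2 i2 * ?inS f3 i3 * ?inS f4 i4
        - ?outS f1 i1 * ?outS f2 i2 * ?outS f3 i3 * ?outS f4 i4" for i1 i2 i3 i4
    unfolding of_bool_meets_both by (simp add: algebra_simps)
  then show ?thesis
    by (simp only: sum_subtractf sum4_mult_separable) (simp add: Compl_eq)
qed

lemma steiner_form4_edge_sum:
  fixes E :: "'n::finite set set"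
  assumes "is_tree UNIV E"
  shows "steiner_form4 E x1 x2 x3 x4 = (\<Sum>e\<in>E.
      sum (($) x1) UNIV * sum (($) x2) UNIV * sum (($) x3) UNIV * sum (($) x4) UNIV
    - sum (($) x1) (shore E e) * sum (($) x2) (shore E e)
        * sum (($) x3) (shore E e) * sum (($) x4) (shore E e)
    - sum (($) x1) (- shore E e) * sum (($) x2) (- shore E e)
        * sum (($) x3) (- shore E e) * sum (($) x4) (- shore E e))"
proof -
  have "real (steiner_dist UNIV E U) = (\<Sum>e\<in>E. of_bool (separates E e U))" for U
    using steiner_dist_tree[OF assms] by (simp add: Int_def)
  then have "steiner_form4 E x1 x2 x3 x4 = (\<Sum>i1\<in>UNIV. \<Sum>i2\<in>UNIV. \<Sum>i3\<in>UNIV. \<Sum>i4\<in>UNIV. \<Sum>e\<in>E.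
      of_bool (separates E e {i1, i2, i3, i4}) * x1 $ i1 * x2 $ i2 * x3 $ i3 * x4 $ i4)"
    by (simp only: steiner_form4_def sum_distrib_right)
  also have "\<dots> = (\<Sum>e\<in>E. \<Sum>i1\<in>UNIV. \<Sum>i2\<in>UNIV. \<Sum>i3\<in>UNIV. \<Sum>i4\<in>UNIV.
      of_bool (separates E e {i1, i2, i3, i4}) * x1 $ i1 * x2 $ i2 * x3 $ i3 * x4 $ i4)"
    by (simp only: sum.swap[where B = E])
  finally show ?thesis
    by (simp only: separates_def sum4_separating_indicator)
qed

subsection \<open>The contribution of a single edge\<close>

lemma sum_Compl:
  fixes f :: "'n::finite \<Rightarrow> real"
  shows "sum f (- S) = sum f UNIV - sum f S"
  by (simp add: Compl_eq_Diff_UNIV sum_diff)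

lemma sum_A_mat_mult:
  fixes v :: "real^'n::finite"
  shows "sum (($) (A_mat *v v)) S
           = 2 * (real (card S) / real CARD('n)) * sum (($) v) UNIV - sum (($) v) S"
proof -
  have "(A_mat *v v) $ i = 2 / real CARD('n) * sum (($) v) UNIV - v $ i" for i
    by (simp add: matrix_vector_mult_def A_mat_def left_diff_distrib sum_subtractf
        sum_distrib_left of_bool_def[symmetric])
  then show ?thesis
    by (simp add: sum_subtractf)
qed

definition edge_term :: "real \<Rightarrow> real \<Rightarrow> real \<Rightarrow> real" where
  "edge_term s a t = 4 * (a - t * s) ^ 4 + 4 * s ^ 4 * t * (1 - t) * (t\<^sup>2 - t + 2)"

text \<open>With \<open>s\<close> and \<open>a\<close> the sums of \<open>v\<close> over all vertices and over \<open>S\<close>, and \<open>t = |S|/n\<close>,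
  the sums of \<open>A v\<close> are \<open>s\<close> and \<open>2ts - a\<close>; the right-hand side is then the summand of
  an edge in \<open>C1 + C3\<close>.\<close>

lemma edge_term_eq:
  fixes s a t :: real
  shows "edge_term s a t =
      (s * s * s * s - a * a * a * (2 * t * s - a) - (s - a) * (s - a) * (s - a) * (s - (2 * t * s - a)))
    + (s * s * s * s - a * (2 * t * s - a) * (2 * t * s - a) * (2 * t * s - a)
       - (s - a) * (s - (2 * t * s - a)) * (s - (2 * t * s - a)) * (s - (2 * t * s - a)))"
  unfolding edge_term_def by algebra

lemma quadratic_factor_pos: "0 < t\<^sup>2 - t + (2::real)"
  using sum_power2_ge_zero[of "t - 1/2" 0] by (simp add: power2_eq_square algebra_simps)

lemma edge_term_nonneg: "0 \<le> t \<Longrightarrow> t \<le> 1 \<Longrightarrow> 0 \<le> edge_term s a t"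
  unfolding edge_term_def using quadratic_factor_pos[of t] by (simp add: zero_le_even_power)

lemma edge_term_pos: "0 < t \<Longrightarrow> t < 1 \<Longrightarrow> s \<noteq> 0 \<Longrightarrow> 0 < edge_term s a t"
  unfolding edge_term_def using quadratic_factor_pos[of t]
  by (intro add_nonneg_pos) (simp_all add: zero_le_even_power)

lemma edge_term_zero: "edge_term 0 a t = 0 \<Longrightarrow> a = 0"
  by (simp add: edge_term_def)

lemma C1_plus_C3_edge_sum:
  fixes E :: "'n::finite set set" and v :: "real^'n"
  assumes "is_tree UNIV E"
  shows "steiner_form4 E v v v (A_mat *v v) + steiner_form4 E v (A_mat *v v) (A_mat *v v) (A_mat *v v)
    = (\<Sum>e\<in>E. edge_term (sum (($) v) UNIV) (sum (($) v) (shore E e))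
                        (real (card (shore E e)) / real CARD('n)))"
  unfolding steiner_form4_edge_sum[OF assms] sum.distrib[symmetric]
  by (simp only: edge_term_eq sum_Compl sum_A_mat_mult[of v UNIV] sum_A_mat_mult[of v "shore E _"])
     (simp add: mult.commute)

subsection \<open>Vanishing of a vector with zero sums over all sides\<close>

lemma side_sum_zero:
  fixes E :: "'n::finite set set" and v :: "real^'n"
  assumes tree: "is_tree UNIV E" and "sum (($) v) UNIV = 0"
    and "\<forall>e\<in>E. sum (($) v) (shore E e) = 0" and "{x, y} \<in> E"
  shows "sum (($) v) (side E {x, y} x) = 0"
proof -
  obtain x' y' where e: "{x, y} = {x', y'}"
    and sides: "shore E {x, y} = side E {x, y} x'" "- shore E {x, y} = side E {x, y} y'"
    using tree_edge_shore[OF tree assms(4)] by metis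
  then consider "x = x'" | "x = y'"
    by (auto simp: doubleton_eq_iff)
  then show ?thesis
  proof cases
    case 1
    have "sum (($) v) (shore E {x, y}) = 0"
      using assms(3,4) by blast
    with sides(1) 1 show ?thesis
      by simp
  next
    case 2
    with sides(2) have "side E {x, y} x = - shore E {x, y}"
      by simp
    with assms(2-4) show ?thesis
      by (simp add: sum_Compl)
  qed
qed

lemma side_mem_neighbour_side:
  assumes "z \<in> side E e x" "z \<noteq> x"
  obtains x' where "{x, x'} \<in> E" "{x, x'} \<noteq> e" "z \<in> side E {x, x'} x'"
proof -
  have "(x, z) \<in> (adj_rel (E - {e}))\<^sup>*"
    using assms(1) by (simp add: side_def)
  then have "z = x \<or> (\<exists>x'. {x, x'} \<in> E \<and> {x, x'} \<noteq> e \<and> z \<in> side E {x, x'} x')"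
  proof (induction rule: rtrancl_induct)
    case (step b c)
    then have bc: "{b, c} \<in> E" "{b, c} \<noteq> e"
      by auto
    show ?case
    proof (cases "b = x")
      case True
      with bc show ?thesis
        by (intro disjI2 exI[of _ c]) simp
    next
      case False
      then obtain x' where x': "{x, x'} \<in> E" "{x, x'} \<noteq> e" "b \<in> side E {x, x'} x'"
        using step.IH by blast
      have "c = x \<or> c \<in> side E {x, x'} x'"
        using side_closed[OF x'(3) bc(1)] by (cases "{b, c} = {x, x'}") (auto simp: doubleton_eq_iff)
      then show ?thesis using x' by blast
    qed
  qed simp
  with assms(2) that show ?thesis by blast
qed

lemma neighbour_side_subset:
  assumes tree: "is_tree UNIV E" and e: "{x, y} \<in> E" and f: "{x, x'} \<in> E" "{x, x'} \<noteq> {x, y}"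
  shows "side E {x, x'} x' \<subseteq> side E {x, y} x - {x}"
proof -
  have acyclic: "\<not> has_cycle E"
    using tree by (simp add: is_tree_def)
  have x_out: "x \<notin> side E {x, x'} x'"
    using other_end_notin_side[OF acyclic, of x' x] f tree_edge_distinct[OF tree f(1)]
    by (simp add: insert_commute)
  have y_out: "y \<notin> side E {x, y} x"
    using other_end_notin_side[OF acyclic e] tree_edge_distinct[OF tree e] by simp
  have "c \<in> side E {x, y} x" if "(x', c) \<in> (adj_rel (E - {{x, x'}}))\<^sup>*" for c
    using that
  proof (induction rule: rtrancl_induct)
    case base
    show ?case
      using side_closed[OF side_self f] by (simp add: eq_commute)
  next
    case (step b c)
    then have "b \<noteq> x"
      using x_out by (auto simp: side_def)
    with step y_out show ?case
      using side_closed[of b E "{x, y}" x c] by (auto simp: doubleton_eq_iff)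
  qed
  with x_out show ?thesis
    by (auto simp: side_def)
qed

lemma zero_on_side:
  fixes E :: "'n::finite set set" and v :: "real^'n"
  assumes tree: "is_tree UNIV E"
    and sums: "\<And>x y. {x, y} \<in> E \<Longrightarrow> sum (($) v) (side E {x, y} x) = 0"
    and "{x, y} \<in> E" "z \<in> side E {x, y} x"
  shows "v $ z = 0"
  using assms(3,4)
proof (induction "card (side E {x, y} x)" arbitrary: x y z rule: less_induct)
  case less
  have inner: "v $ z' = 0" if z': "z' \<in> side E {x, y} x - {x}" for z'
  proof -
    obtain x' where x': "{x, x'} \<in> E" "{x, x'} \<noteq> {x, y}" "z' \<in> side E {x, x'} x'"
      using z' side_mem_neighbour_side by (metis DiffE singletonI)
    have "side E {x, x'} x' \<subset> side E {x, y} x"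
      using neighbour_side_subset[OF tree less.prems(1) x'(1,2)] by auto
    then have "card (side E {x', x} x') < card (side E {x, y} x)"
      by (simp add: psubset_card_mono insert_commute)
    then show ?thesis
      using less.hyps[of x' x z'] x' by (simp add: insert_commute)
  qed
  then have "sum (($) v) (side E {x, y} x) = v $ x"
    by (simp add: sum.remove[of _ x])
  with sums[OF less.prems(1)] inner less.prems(2) show ?case
    by (cases "z = x") auto
qed

lemma tree_incident_edge:
  assumes "is_tree UNIV E" "u' \<noteq> u"
  obtains c where "{u, c} \<in> E"
proof -
  have "(u, u') \<in> (adj_rel E)\<^sup>*"
    using assms(1) by (simp add: is_tree_def connected_on_def)
  then have "(u, u') \<in> (adj_rel E)\<^sup>+"
    using assms(2) by (simp add: rtrancl_eq_or_trancl)
  then show ?thesis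
    using that by (auto dest: tranclD)
qed

lemma shore_card_bounds:
  fixes E :: "'n::finite set set"
  assumes "is_tree UNIV E" "e \<in> E"
  shows "0 < card (shore E e)" "card (shore E e) < CARD('n)"
proof -
  obtain x y where "x \<in> shore E e" "y \<notin> shore E e"
    using tree_edge_shore[OF assms] by (metis ComplD side_self)
  then show "0 < card (shore E e)" "card (shore E e) < CARD('n)"
    by (auto simp: card_gt_0_iff intro!: psubset_card_mono)
qed

lemma zero_if_edge_terms_zero:
  fixes E :: "'n::finite set set" and v :: "real^'n"
  assumes tree: "is_tree UNIV E" and "CARD('n) \<ge> 2"
    and zero: "\<forall>e\<in>E. edge_term (sum (($) v) UNIV) (sum (($) v) (shore E e))
                                (real (card (shore E e)) / real CARD('n)) = 0"
  shows "v = 0"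
proof (rule ccontr)
  assume "v \<noteq> 0"
  then obtain u where "v $ u \<noteq> 0"
    by (auto simp: vec_eq_iff)
  obtain u' :: 'n where "u' \<noteq> u"
    using assms(2) by (metis (full_types) card_2_iff' ex_card)
  then obtain c where uc: "{u, c} \<in> E"
    by (rule tree_incident_edge[OF tree])
  have total: "sum (($) v) UNIV = 0"
  proof (rule ccontr)
    assume "sum (($) v) UNIV \<noteq> 0"
    with shore_card_bounds[OF tree uc] have "0 < edge_term (sum (($) v) UNIV)
        (sum (($) v) (shore E {u, c})) (real (card (shore E {u, c})) / real CARD('n))"
      by (intro edge_term_pos) auto
    with zero uc show False by simp
  qed
  then have "sum (($) v) (side E {x, y} x) = 0" if "{x, y} \<in> E" for x y
    using side_sum_zero[OF tree total _ that] zero edge_term_zero by metis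
  then have "v $ u = 0"
    using zero_on_side[OF tree _ uc side_self] by blast
  with \<open>v $ u \<noteq> 0\<close> show False ..
qed

theorem mainTheorem14:
  fixes E :: "('n::finite) set set"
  assumes "CARD('n) \<ge> 3"
    and "is_tree UNIV E"
  shows "\<forall>v :: real^'n. v \<noteq> 0 \<longrightarrow>
           steiner_form4 E v v v (A_mat *v v)
         + steiner_form4 E v (A_mat *v v) (A_mat *v v) (A_mat *v v) > 0"
proof (intro allI impI)
  fix v :: "real^'n"
  assume "v \<noteq> 0"
  let ?term = "\<lambda>e. edge_term (sum (($) v) UNIV) (sum (($) v) (shore E e))
                              (real (card (shore E e)) / real CARD('n))"
  have nonneg: "0 \<le> ?term e" for e
    using card_mono[of UNIV "shore E e"] by (intro edge_term_nonneg) auto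
  have "\<not> (\<forall>e\<in>E. ?term e = 0)"
    using zero_if_edge_terms_zero[OF assms(2)] assms(1) \<open>v \<noteq> 0\<close> by auto
  then have "0 < (\<Sum>e\<in>E. ?term e)"
    using nonneg sum_nonneg_eq_0_iff[of E ?term] sum_nonneg[of E ?term] by fastforce
  then show "steiner_form4 E v v v (A_mat *v v)
           + steiner_form4 E v (A_mat *v v) (A_mat *v v) (A_mat *v v) > 0"
    unfolding C1_plus_C3_edge_sum[OF assms(2)] .
qed

end
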